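(* Let $G$ be a BK-free graph with $\omega(G)<\Delta(G)$, and suppose $G$ is the line graph of a multigraph $H$. Then $\mu(H)\le 3$. Moreover, no edge of multiplicity $3$ in $H$ lies on a triangle of $H$ (i.e., if $x_1,x_2$ are joined by three parallel edges, there is no vertex $x_3$ adjacent to both $x_1$ and $x_2$).
   Context: Multigraphs are loopless but may have parallel edges; $\mu(H)$ is the maximum multiplicity of an edge of $H$. The line graph of $H$ has vertex set $E(H)$, two vertices adjacent when the corresponding edges share an endpoint. For a graph $G$ and $f:V(G)\to\mathbb{Z}^+$, an orientation $D$ of $E(G)$ is an Alon--Tarsi orientation for $f$ if $d^+_D(v)<f(v)$ for every vertex $v$ and the number of spanning Eulerian subgraphs of $D$ (spanning subdigraphs in which every vertex has equal in- and out-degree) with an even number of edges differs from the number with an odd number of edges; $G$ is $f$-AT if such an orientation exists. A digraph (in which some edges may be oriented in both directions) is kernel-perfect if every induced subdigraph $D'$ has a kernel, i.e., a set $I\subseteq V(D')$ with no arc between two of its vertices such that every vertex of $D'$ not in $I$ has an out-neighbor in $I$. A graph $H$ is $f$-KP if some supergraph $H'$ of $H$ on the same vertex set (possibly with parallel edges) has a kernel-perfect orientation with $d^+(v)<f(v)$ for all $v$. A connected graph $G$ is BK-free if it has no induced subgraph $H$ that is $f_H$-AT or $f_H$-KP, where $f_H(v)=d_H(v)-1+\Delta(G)-d_G(v)$ for $v\in V(H)$. *)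

theory Defs
  imports Main
begin

definition simple_graph :: "'v set \<Rightarrow> ('v \<Rightarrow> 'v \<Rightarrow> bool) \<Rightarrow> bool" where
  "simple_graph V adj \<longleftrightarrow> finite V \<and> (\<forall>u v. adj u v \<longrightarrow> u \<in> V \<and> v \<in> V \<and> u \<noteq> v \<and> adj v u)"

definition connected_graph :: "'v set \<Rightarrow> ('v \<Rightarrow> 'v \<Rightarrow> bool) \<Rightarrow> bool" where
  "connected_graph V adj \<longleftrightarrow> V \<noteq> {} \<and>
     (\<forall>u\<in>V. \<forall>v\<in>V. (u, v) \<in> {(x, y). adj x y}\<^sup>*)"

definition deg_in :: "'v set \<Rightarrow> ('v \<Rightarrow> 'v \<Rightarrow> bool) \<Rightarrow> 'v \<Rightarrow> nat" where
  "deg_in S adj v = card {w \<in> S. adj v w}"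

definition max_degree :: "'v set \<Rightarrow> ('v \<Rightarrow> 'v \<Rightarrow> bool) \<Rightarrow> nat" where
  "max_degree V adj = Max (deg_in V adj ` V)"

definition is_clique :: "'v set \<Rightarrow> ('v \<Rightarrow> 'v \<Rightarrow> bool) \<Rightarrow> 'v set \<Rightarrow> bool" where
  "is_clique V adj K \<longleftrightarrow> K \<subseteq> V \<and> (\<forall>u\<in>K. \<forall>v\<in>K. u \<noteq> v \<longrightarrow> adj u v)"

definition clique_number :: "'v set \<Rightarrow> ('v \<Rightarrow> 'v \<Rightarrow> bool) \<Rightarrow> nat" where
  "clique_number V adj = Max {card K | K. is_clique V adj K}"

definition is_orientation :: "'v set \<Rightarrow> ('v \<Rightarrow> 'v \<Rightarrow> bool) \<Rightarrow> ('v \<times> 'v) set \<Rightarrow> bool" where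
  "is_orientation S adj A \<longleftrightarrow>
     A \<subseteq> {(u, v). u \<in> S \<and> v \<in> S \<and> adj u v} \<and>
     (\<forall>u\<in>S. \<forall>v\<in>S. adj u v \<longrightarrow> ((u, v) \<in> A \<longleftrightarrow> (v, u) \<notin> A))"

definition outdeg :: "('v \<times> 'v) set \<Rightarrow> 'v \<Rightarrow> nat" where
  "outdeg A v = card {w. (v, w) \<in> A}"

definition indeg :: "('v \<times> 'v) set \<Rightarrow> 'v \<Rightarrow> nat" where
  "indeg A v = card {w. (w, v) \<in> A}"

definition eulerian_subgraphs :: "'v set \<Rightarrow> ('v \<times> 'v) set \<Rightarrow> ('v \<times> 'v) set set" where
  "eulerian_subgraphs S A = {B. B \<subseteq> A \<and> (\<forall>v\<in>S. outdeg B v = indeg B v)}"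

definition AT_orientation :: "'v set \<Rightarrow> ('v \<Rightarrow> 'v \<Rightarrow> bool) \<Rightarrow> ('v \<Rightarrow> int) \<Rightarrow> ('v \<times> 'v) set \<Rightarrow> bool" where
  "AT_orientation S adj f A \<longleftrightarrow> is_orientation S adj A \<and>
     (\<forall>v\<in>S. int (outdeg A v) < f v) \<and>
     card {B \<in> eulerian_subgraphs S A. even (card B)} \<noteq> card {B \<in> eulerian_subgraphs S A. odd (card B)}"

definition f_AT :: "'v set \<Rightarrow> ('v \<Rightarrow> 'v \<Rightarrow> bool) \<Rightarrow> ('v \<Rightarrow> int) \<Rightarrow> bool" where
  "f_AT S adj f \<longleftrightarrow> (\<exists>A. AT_orientation S adj f A)"

text \<open>A finite directed multigraph on S (loopless) is given by arc multiplicities m u v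
  (number of arcs from u to v). Kernel-perfectness only depends on which arcs are present.\<close>
definition has_kernel :: "('v \<Rightarrow> 'v \<Rightarrow> nat) \<Rightarrow> 'v set \<Rightarrow> bool" where
  "has_kernel m T \<longleftrightarrow> (\<exists>I \<subseteq> T. (\<forall>u\<in>I. \<forall>v\<in>I. m u v = 0) \<and>
      (\<forall>u \<in> T - I. \<exists>v\<in>I. m u v > 0))"

definition kernel_perfect :: "'v set \<Rightarrow> ('v \<Rightarrow> 'v \<Rightarrow> nat) \<Rightarrow> bool" where
  "kernel_perfect S m \<longleftrightarrow> (\<forall>T \<subseteq> S. has_kernel m T)"

definition mout :: "'v set \<Rightarrow> ('v \<Rightarrow> 'v \<Rightarrow> nat) \<Rightarrow> 'v \<Rightarrow> nat" where
  "mout S m v = (\<Sum>w\<in>S. m v w)"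

text \<open>An oriented multigraph on S
  whose underlying multigraph contains every edge of the graph on S is exactly a
  multiplicity function m, zero outside S x S and on the diagonal, with m u v + m v u \<ge> 1
  for each edge uv.\<close>
definition f_KP :: "'v set \<Rightarrow> ('v \<Rightarrow> 'v \<Rightarrow> bool) \<Rightarrow> ('v \<Rightarrow> int) \<Rightarrow> bool" where
  "f_KP S adj f \<longleftrightarrow> (\<exists>m :: 'v \<Rightarrow> 'v \<Rightarrow> nat.
     (\<forall>u v. m u v > 0 \<longrightarrow> u \<in> S \<and> v \<in> S \<and> u \<noteq> v) \<and>
     (\<forall>u\<in>S. \<forall>v\<in>S. adj u v \<longrightarrow> m u v + m v u \<ge> 1) \<and>
     kernel_perfect S m \<and>
     (\<forall>v\<in>S. int (mout S m v) < f v))"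

definition f_BK :: "'v set \<Rightarrow> ('v \<Rightarrow> 'v \<Rightarrow> bool) \<Rightarrow> 'v set \<Rightarrow> 'v \<Rightarrow> int" where
  "f_BK V adj S v = int (deg_in S adj v) - 1 + int (max_degree V adj) - int (deg_in V adj v)"

definition BK_free :: "'v set \<Rightarrow> ('v \<Rightarrow> 'v \<Rightarrow> bool) \<Rightarrow> bool" where
  "BK_free V adj \<longleftrightarrow> connected_graph V adj \<and>
     (\<forall>S. S \<subseteq> V \<longrightarrow> S \<noteq> {} \<longrightarrow>
        \<not> f_AT S adj (f_BK V adj S) \<and> \<not> f_KP S adj (f_BK V adj S))"

text \<open>G = (V, adj) is the line graph of the loopless multigraph H whose edge set is V
  and whose edge e has endpoint set ends e (a 2-element set of vertices of H).\<close>
definition line_graph_of :: "'v set \<Rightarrow> ('v \<Rightarrow> 'v \<Rightarrow> bool) \<Rightarrow> ('v \<Rightarrow> 'x set) \<Rightarrow> bool" where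
  "line_graph_of V adj ends \<longleftrightarrow> (\<forall>e\<in>V. card (ends e) = 2) \<and>
     (\<forall>e\<in>V. \<forall>e'\<in>V. e \<noteq> e' \<longrightarrow> (adj e e' \<longleftrightarrow> ends e \<inter> ends e' \<noteq> {}))"

definition multiplicity :: "'v set \<Rightarrow> ('v \<Rightarrow> 'x set) \<Rightarrow> 'x \<Rightarrow> 'x \<Rightarrow> nat" where
  "multiplicity V ends x y = card {e \<in> V. ends e = {x, y}}"

end

theory Submission
  imports Defs
begin

(* Let xy be an edge of H of multiplicity m and E(u) the set of edges of H at u.  Each of the m
   parallel edges has degree |E(x) \<union> E(y)| - 1 in G = L(H).  A vertex of degree at most
   Delta - 2 would be f-AT on its own, so |E(x) \<union> E(y)| is Delta or Delta + 1; and since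
   omega(G) < Delta, every family of pairwise intersecting edges of H, such as E(x) or the edges
   inside a triangle, has fewer than Delta members.  This forces edges at x and y outside the
   parallel class whose far endpoints are spread out.  If m \<ge> 4, or m = 3 and xy lies on a
   triangle, the parallel class together with a few of these edges induces in G a join of K_r
   (r = 3, 4) with one of 2K1, P3, 2K2, P4, C4, carrying enough slack in f_H to be f_H-AT:
   an explicit orientation of each such graph has a nonzero signed count of Eulerian
   subdigraphs, which is the Alon-Tarsi condition.  This contradicts BK-freeness. *)

section \<open>Signed counts of Eulerian subdigraphs\<close>

definition out_count :: "(nat \<times> nat) list \<Rightarrow> nat \<Rightarrow> nat" where
  "out_count ps i = length (filter (\<lambda>a. fst a = i) ps)"

definition in_count :: "(nat \<times> nat) list \<Rightarrow> nat \<Rightarrow> nat" where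
  "in_count ps i = length (filter (\<lambda>a. snd a = i) ps)"

definition net_outdeg :: "(nat \<times> nat) set \<Rightarrow> nat \<Rightarrow> int" where
  "net_outdeg B i = int (card {j. (i, j) \<in> B}) - int (card {j. (j, i) \<in> B})"

(* For b = 0 this is the number of even minus the number of odd Eulerian subdigraphs of P. *)
definition signed_balanced_sum :: "(nat \<times> nat) set \<Rightarrow> int list \<Rightarrow> int" where
  "signed_balanced_sum P b =
     (\<Sum>B\<in>Pow P. if \<forall>i<length b. b ! i + net_outdeg B i = 0 then (-1) ^ card B else 0)"

definition balance_feasible :: "(nat \<times> nat) list \<Rightarrow> int list \<Rightarrow> nat \<Rightarrow> bool" where
  "balance_feasible ps b i \<longleftrightarrow> - int (out_count ps i) \<le> b ! i \<and> b ! i \<le> int (in_count ps i)"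

(* The remaining out- and in-degrees at both ends of each arc are computed once, so that the
   pruned recursion below evaluates quickly. *)
fun annotate_counts :: "(nat \<times> nat) list \<Rightarrow> ((nat \<times> nat) \<times> (int \<times> int) \<times> (int \<times> int)) list" where
  "annotate_counts [] = []"
| "annotate_counts ((u, v) # ps) =
     ((u, v), (int (out_count ps u), int (in_count ps u)),
      (int (out_count ps v), int (in_count ps v)))
     # annotate_counts ps"

fun signed_count_annotated ::
  "((nat \<times> nat) \<times> (int \<times> int) \<times> (int \<times> int)) list \<Rightarrow> int list \<Rightarrow> int" where
  "signed_count_annotated [] b = (if set b \<subseteq> {0} then 1 else 0)"
| "signed_count_annotated (((u, v), (ou, iu), (ov, iv)) # as) b =
     (let count = (\<lambda>d. if - ou \<le> d ! u \<and> d ! u \<le> iu \<and> - ov \<le> d ! v \<and> d ! v \<le> iv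
                       then signed_count_annotated as d else 0)
      in count b - count (b[u := b ! u + 1, v := b ! v - 1]))"

definition signed_euler_count :: "(nat \<times> nat) list \<Rightarrow> int list \<Rightarrow> int" where
  "signed_euler_count ps b = signed_count_annotated (annotate_counts ps) b"

lemma signed_euler_count_Nil: "signed_euler_count [] b = (if set b \<subseteq> {0} then 1 else 0)"
  by (simp add: signed_euler_count_def)

lemma signed_euler_count_Cons:
  "signed_euler_count ((u, v) # ps) b =
     (let count = (\<lambda>d. if balance_feasible ps d u \<and> balance_feasible ps d v
                       then signed_euler_count ps d else 0)
      in count b - count (b[u := b ! u + 1, v := b ! v - 1]))"
  by (simp add: signed_euler_count_def balance_feasible_def Let_def)

lemma card_arcs_from_le_out_count:
  assumes "B \<subseteq> set ps" "distinct ps"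
  shows "card {j. (i, j) \<in> B} \<le> out_count ps i"
proof -
  have "card {j. (i, j) \<in> B} \<le> card (snd ` {a \<in> set ps. fst a = i})"
    using assms(1) by (intro card_mono) force+
  also have "\<dots> \<le> card {a \<in> set ps. fst a = i}" by (rule card_image_le) auto
  also have "\<dots> = out_count ps i"
    using assms(2) distinct_card[of "filter (\<lambda>a. fst a = i) ps"] by (simp add: out_count_def)
  finally show ?thesis .
qed

lemma card_arcs_to_le_in_count:
  assumes "B \<subseteq> set ps" "distinct ps"
  shows "card {j. (j, i) \<in> B} \<le> in_count ps i"
proof -
  have "card {j. (j, i) \<in> B} \<le> card (fst ` {a \<in> set ps. snd a = i})"
    using assms(1) by (intro card_mono) force+
  also have "\<dots> \<le> card {a \<in> set ps. snd a = i}" by (rule card_image_le) auto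
  also have "\<dots> = in_count ps i"
    using assms(2) distinct_card[of "filter (\<lambda>a. snd a = i) ps"] by (simp add: in_count_def)
  finally show ?thesis .
qed

lemma card_arcs_to_eq_in_count:
  assumes "distinct ps"
  shows "card {j. (j, i) \<in> set ps} = in_count ps i"
proof -
  have "{j. (j, i) \<in> set ps} = fst ` {a \<in> set ps. snd a = i}" by force
  moreover have "inj_on fst {a \<in> set ps. snd a = i}" by (auto simp: inj_on_def prod_eq_iff)
  ultimately have "card {j. (j, i) \<in> set ps} = card {a \<in> set ps. snd a = i}"
    by (simp add: card_image)
  also have "\<dots> = in_count ps i"
    using assms distinct_card[of "filter (\<lambda>a. snd a = i) ps"] by (simp add: in_count_def)
  finally show ?thesis .
qed

lemma signed_balanced_sum_infeasible:
  assumes "distinct ps" "i < length b" "\<not> balance_feasible ps b i"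
  shows "signed_balanced_sum (set ps) b = 0"
  unfolding signed_balanced_sum_def
proof (rule sum.neutral, intro ballI)
  fix B assume "B \<in> Pow (set ps)"
  then have "b ! i + net_outdeg B i \<noteq> 0"
    using card_arcs_from_le_out_count[of B ps i] card_arcs_to_le_in_count[of B ps i] assms
    unfolding balance_feasible_def net_outdeg_def by auto
  then show "(if \<forall>i<length b. b ! i + net_outdeg B i = 0 then (-1) ^ card B else 0) = (0::int)"
    using assms(2) by auto
qed

lemma net_outdeg_insert:
  assumes "(u, v) \<notin> B" "finite B" "u \<noteq> v"
  shows "net_outdeg (insert (u, v) B) i =
           net_outdeg B i + (if i = u then 1 else 0) - (if i = v then 1 else 0)"
proof -
  have "finite {j. (i, j) \<in> B}"
    by (rule finite_subset[of _ "snd ` B"]) (use assms(2) in force)+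
  moreover have "finite {j. (j, i) \<in> B}"
    by (rule finite_subset[of _ "fst ` B"]) (use assms(2) in force)+
  moreover have "{j. (i, j) \<in> insert (u, v) B} =
                   (if i = u then insert v {j. (i, j) \<in> B} else {j. (i, j) \<in> B})"
    "{j. (j, i) \<in> insert (u, v) B} =
       (if i = v then insert u {j. (j, i) \<in> B} else {j. (j, i) \<in> B})"
    by auto
  ultimately show ?thesis
    using assms unfolding net_outdeg_def by (auto simp: card_insert_if)
qed

lemma signed_balanced_sum_insert:
  assumes "(u, v) \<notin> P" "finite P" "u \<noteq> v"
  shows "signed_balanced_sum (insert (u, v) P) b =
           signed_balanced_sum P b - signed_balanced_sum P (b[u := b ! u + 1, v := b ! v - 1])"
proof -
  let ?c = "b[u := b ! u + 1, v := b ! v - 1]"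
  let ?F = "\<lambda>b B. if \<forall>i<length b. b ! i + net_outdeg B i = 0 then (-1::int) ^ card B else 0"
  have "signed_balanced_sum (insert (u, v) P) b =
          sum (?F b) (Pow P) + sum (?F b) (insert (u, v) ` Pow P)"
    unfolding signed_balanced_sum_def Pow_insert
    by (rule sum.union_disjoint) (use assms(1,2) in auto)
  also have "sum (?F b) (insert (u, v) ` Pow P) = sum (?F b \<circ> insert (u, v)) (Pow P)"
    by (rule sum.reindex, rule inj_onI)
      (use assms(1) in \<open>auto dest: insert_ident[THEN iffD1, rotated 2]\<close>)
  also have "\<dots> = sum (\<lambda>B. - ?F ?c B) (Pow P)"
  proof (rule sum.cong[OF refl])
    fix B assume "B \<in> Pow P"
    then have B: "(u, v) \<notin> B" "finite B"
      using assms(1,2) finite_subset by auto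
    have "b ! i + net_outdeg (insert (u, v) B) i = ?c ! i + net_outdeg B i" if "i < length b" for i
      using that assms(3) net_outdeg_insert[OF B assms(3)] by (auto simp: nth_list_update)
    then show "(?F b \<circ> insert (u, v)) B = - ?F ?c B"
      using B by simp
  qed
  finally show ?thesis
    by (simp add: signed_balanced_sum_def sum_negf)
qed

lemma signed_euler_count_eq_signed_balanced_sum:
  assumes "distinct ps" "\<forall>(u, v)\<in>set ps. u \<noteq> v \<and> u < length b \<and> v < length b"
  shows "signed_euler_count ps b = signed_balanced_sum (set ps) b"
  using assms
proof (induction ps arbitrary: b)
  case Nil
  have "(\<forall>i<length b. b ! i = 0) \<longleftrightarrow> set b \<subseteq> {0}"
    by (force simp: subset_iff in_set_conv_nth)
  then show ?case
    by (simp add: signed_euler_count_Nil signed_balanced_sum_def net_outdeg_def)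
next
  case (Cons a ps)
  obtain u v where a: "a = (u, v)" by fastforce
  let ?c = "b[u := b ! u + 1, v := b ! v - 1]"
  have uv: "u \<noteq> v" "u < length b" "v < length b" "(u, v) \<notin> set ps"
    using Cons.prems a by auto
  have pruned: "(if balance_feasible ps d u \<and> balance_feasible ps d v
                 then signed_euler_count ps d else 0) = signed_balanced_sum (set ps) d"
    if "length d = length b" for d
    using Cons.IH[of d] Cons.prems that uv a
      signed_balanced_sum_infeasible[of ps u d] signed_balanced_sum_infeasible[of ps v d]
    by auto
  show ?case
    using pruned[of b] pruned[of ?c] signed_balanced_sum_insert[OF uv(4) _ uv(1), of b]
    by (simp add: a signed_euler_count_Cons)
qed

lemma signed_balanced_sum_replicate_zero:
  fixes n :: nat
  assumes P: "finite P"
  defines "E \<equiv> {B \<in> Pow P. \<forall>i<n. net_outdeg B i = 0}"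
  shows "signed_balanced_sum P (replicate n 0) =
           int (card {B \<in> E. even (card B)}) - int (card {B \<in> E. odd (card B)})"
proof -
  have fin: "finite E" using P unfolding E_def by simp
  have "signed_balanced_sum P (replicate n 0) = (\<Sum>B\<in>E. (-1::int) ^ card B)"
    unfolding signed_balanced_sum_def E_def by (rule sum.mono_neutral_cong_right) (use P in auto)
  also have "\<dots> = (\<Sum>B\<in>{B \<in> E. even (card B)}. (-1) ^ card B) +
      (\<Sum>B\<in>{B \<in> E. odd (card B)}. (-1) ^ card B)"
    by (subst sum.union_disjoint[symmetric]) (use fin in \<open>auto intro: sum.cong\<close>)
  finally show ?thesis by simp
qed

section \<open>Alon--Tarsi certificates\<close>

lemma deg_in_eq_outdeg_plus_indeg:
  assumes "simple_graph V adj" "S \<subseteq> V" "is_orientation S adj A" "v \<in> S"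
  shows "deg_in S adj v = outdeg A v + indeg A v"
proof -
  have A: "A \<subseteq> {(u, w). u \<in> S \<and> w \<in> S \<and> adj u w}"
    "\<And>w. w \<in> S \<Longrightarrow> adj v w \<Longrightarrow> (v, w) \<in> A \<longleftrightarrow> (w, v) \<notin> A"
    using assms(3,4) unfolding is_orientation_def by auto
  have sym: "adj u w \<Longrightarrow> adj w u" for u w
    using assms(1) unfolding simple_graph_def by blast
  have "{w \<in> S. adj v w} = {w. (v, w) \<in> A} \<union> {w. (w, v) \<in> A}"
    using A sym by blast
  moreover have "{w. (v, w) \<in> A} \<inter> {w. (w, v) \<in> A} = {}"
    using A by blast
  moreover have "finite S"
    using assms(1,2) finite_subset unfolding simple_graph_def by blast
  then have "finite {w. (v, w) \<in> A}" "finite {w. (w, v) \<in> A}"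
    using A(1) by (auto elim!: rev_finite_subset)
  ultimately show ?thesis
    unfolding deg_in_def outdeg_def indeg_def by (simp add: card_Un_disjoint)
qed

lemma arcs_from_map_prod:
  assumes "inj_on \<phi> I" "B \<subseteq> I \<times> I" "i \<in> I"
  shows "{w. (\<phi> i, w) \<in> map_prod \<phi> \<phi> ` B} = \<phi> ` {j. (i, j) \<in> B}"
proof (intro equalityI subsetI)
  fix w assume "w \<in> {w. (\<phi> i, w) \<in> map_prod \<phi> \<phi> ` B}"
  then obtain k j where "(k, j) \<in> B" "\<phi> k = \<phi> i" "w = \<phi> j" by auto
  moreover from this have "k = i" using assms inj_onD[OF assms(1)] by blast
  ultimately show "w \<in> \<phi> ` {j. (i, j) \<in> B}" by auto
qed auto

lemma arcs_to_map_prod: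
  assumes "inj_on \<phi> I" "B \<subseteq> I \<times> I" "i \<in> I"
  shows "{w. (w, \<phi> i) \<in> map_prod \<phi> \<phi> ` B} = \<phi> ` {j. (j, i) \<in> B}"
proof (intro equalityI subsetI)
  fix w assume "w \<in> {w. (w, \<phi> i) \<in> map_prod \<phi> \<phi> ` B}"
  then obtain k j where "(j, k) \<in> B" "\<phi> k = \<phi> i" "w = \<phi> j" by auto
  moreover from this have "k = i" using assms inj_onD[OF assms(1)] by blast
  ultimately show "w \<in> \<phi> ` {j. (j, i) \<in> B}" by auto
qed auto

lemma outdeg_map_prod:
  assumes "inj_on \<phi> I" "B \<subseteq> I \<times> I" "i \<in> I"
  shows "outdeg (map_prod \<phi> \<phi> ` B) (\<phi> i) = card {j. (i, j) \<in> B}"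
  unfolding outdeg_def arcs_from_map_prod[OF assms]
  by (rule card_image, rule inj_on_subset[OF assms(1)]) (use assms(2) in auto)

lemma indeg_map_prod:
  assumes "inj_on \<phi> I" "B \<subseteq> I \<times> I" "i \<in> I"
  shows "indeg (map_prod \<phi> \<phi> ` B) (\<phi> i) = card {j. (j, i) \<in> B}"
  unfolding indeg_def arcs_to_map_prod[OF assms]
  by (rule card_image, rule inj_on_subset[OF assms(1)]) (use assms(2) in auto)

lemma eulerian_subgraphs_map_prod:
  assumes "inj_on \<phi> {..<n}" "P \<subseteq> {..<n} \<times> {..<n}"
  shows "eulerian_subgraphs (\<phi> ` {..<n}) (map_prod \<phi> \<phi> ` P) =
           image (map_prod \<phi> \<phi>) ` {B \<in> Pow P. \<forall>i<n. net_outdeg B i = 0}"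
    (is "?L = ?R")
proof
  show "?L \<subseteq> ?R"
  proof
    fix C assume C: "C \<in> ?L"
    define B where "B = {p \<in> P. map_prod \<phi> \<phi> p \<in> C}"
    have BP: "B \<subseteq> P" unfolding B_def by auto
    have "C \<subseteq> map_prod \<phi> \<phi> ` P" using C unfolding eulerian_subgraphs_def by auto
    then have CB: "C = map_prod \<phi> \<phi> ` B" unfolding B_def by (intro equalityI; force)
    have "net_outdeg B i = 0" if "i < n" for i
      using C that assms outdeg_map_prod[OF assms(1), of B i] indeg_map_prod[OF assms(1), of B i] BP
      unfolding eulerian_subgraphs_def net_outdeg_def CB by auto
    then show "C \<in> ?R" using BP CB by auto
  qed
next
  show "?R \<subseteq> ?L"
  proof
    fix C assume "C \<in> ?R"
    then obtain B where B: "B \<subseteq> P" "\<forall>i<n. net_outdeg B i = 0" "C = map_prod \<phi> \<phi> ` B"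
      by auto
    have "outdeg C (\<phi> i) = indeg C (\<phi> i)" if "i < n" for i
      using B that assms outdeg_map_prod[OF assms(1), of B i] indeg_map_prod[OF assms(1), of B i]
      unfolding net_outdeg_def by auto
    then show "C \<in> ?L" using B unfolding eulerian_subgraphs_def by auto
  qed
qed

lemma card_eulerian_subgraphs_map_prod:
  assumes "inj_on \<phi> {..<n}" "P \<subseteq> {..<n} \<times> {..<n}"
  shows "card {C \<in> eulerian_subgraphs (\<phi> ` {..<n}) (map_prod \<phi> \<phi> ` P). Q (card C)} =
           card {B \<in> {B \<in> Pow P. \<forall>i<n. net_outdeg B i = 0}. Q (card B)}"
proof -
  have inj: "inj_on (map_prod \<phi> \<phi>) P"
    using map_prod_inj_on[OF assms(1) assms(1)] assms(2) by (rule inj_on_subset)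
  then have "card (map_prod \<phi> \<phi> ` B) = card B" if "B \<in> Pow P" for B
    using that by (auto intro: card_image inj_on_subset)
  then have "{C \<in> eulerian_subgraphs (\<phi> ` {..<n}) (map_prod \<phi> \<phi> ` P). Q (card C)} =
      image (map_prod \<phi> \<phi>) ` {B \<in> {B \<in> Pow P. \<forall>i<n. net_outdeg B i = 0}. Q (card B)}"
    unfolding eulerian_subgraphs_map_prod[OF assms] by auto
  moreover have
    "inj_on (image (map_prod \<phi> \<phi>)) {B \<in> {B \<in> Pow P. \<forall>i<n. net_outdeg B i = 0}. Q (card B)}"
    by (rule inj_on_subset[OF inj_on_image_Pow[OF inj]]) auto
  ultimately show ?thesis by (simp add: card_image)
qed

lemma is_orientation_map_prod:
  assumes inj: "inj_on \<phi> {..<n}"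
    and adj: "\<And>i j. i < n \<Longrightarrow> j < n \<Longrightarrow> adj (\<phi> i) (\<phi> j) \<longleftrightarrow> (i, j) \<in> P \<or> (j, i) \<in> P"
    and P: "\<And>i j. (i, j) \<in> P \<Longrightarrow> i < n \<and> j < n \<and> (j, i) \<notin> P"
  shows "is_orientation (\<phi> ` {..<n}) adj (map_prod \<phi> \<phi> ` P)"
  unfolding is_orientation_def
proof (intro conjI ballI impI subsetI)
  fix a assume "a \<in> map_prod \<phi> \<phi> ` P"
  then show "a \<in> {(u, v). u \<in> \<phi> ` {..<n} \<and> v \<in> \<phi> ` {..<n} \<and> adj u v}"
    using adj P by auto
next
  have arc_iff: "(\<phi> i, \<phi> j) \<in> map_prod \<phi> \<phi> ` P \<longleftrightarrow> (i, j) \<in> P" if "i < n" "j < n" for i j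
  proof -
    have "P \<subseteq> {..<n} \<times> {..<n}" using P by auto
    then show ?thesis
      using inj_on_image_mem_iff[OF map_prod_inj_on[OF inj inj], of "(i, j)" P] that by simp
  qed
  fix u v assume uv: "u \<in> \<phi> ` {..<n}" "v \<in> \<phi> ` {..<n}" "adj u v"
  then obtain i j where ij: "i < n" "j < n" "u = \<phi> i" "v = \<phi> j" by blast
  then have "(i, j) \<in> P \<or> (j, i) \<in> P"
    using adj[OF ij(1,2)] uv(3) by simp
  then show "(u, v) \<in> map_prod \<phi> \<phi> ` P \<longleftrightarrow> (v, u) \<notin> map_prod \<phi> \<phi> ` P"
    using arc_iff[OF ij(1,2)] arc_iff[OF ij(2,1)] P ij(3,4) by auto
qed

(* ps orients a graph on {0..<n}, and sl ! i is the slack Delta - d_G available at vertex i.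
   In-degree plus slack at least 2 keeps every out-degree below f_BK, and the nonzero signed
   count of Eulerian subdigraphs is the Alon-Tarsi condition. *)
definition AT_certificate :: "nat \<Rightarrow> nat list \<Rightarrow> (nat \<times> nat) list \<Rightarrow> bool" where
  "AT_certificate n sl ps \<longleftrightarrow>
     distinct ps \<and> (\<forall>(i, j)\<in>set ps. i < n \<and> j < n \<and> (j, i) \<notin> set ps) \<and>
     (\<forall>i<n. 2 \<le> in_count ps i + sl ! i) \<and>
     signed_euler_count ps (replicate n 0) \<noteq> 0"

lemma f_AT_of_AT_certificate:
  fixes \<phi> :: "nat \<Rightarrow> 'v" and f :: "'v \<Rightarrow> int"
  assumes G: "simple_graph V adj" "\<phi> ` {..<n} \<subseteq> V"
    and inj: "inj_on \<phi> {..<n}"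
    and cert: "AT_certificate n sl ps"
    and adj: "\<And>i j. i < n \<Longrightarrow> j < n \<Longrightarrow> adj (\<phi> i) (\<phi> j) \<longleftrightarrow> (i, j) \<in> set ps \<or> (j, i) \<in> set ps"
    and f: "\<And>i. i < n \<Longrightarrow> int (deg_in (\<phi> ` {..<n}) adj (\<phi> i)) + int (sl ! i) \<le> f (\<phi> i) + 1"
  shows "f_AT (\<phi> ` {..<n}) adj f"
proof -
  define A where "A = map_prod \<phi> \<phi> ` set ps"
  have ps: "distinct ps" "\<And>i j. (i, j) \<in> set ps \<Longrightarrow> i < n \<and> j < n \<and> (j, i) \<notin> set ps"
    "\<And>i. i < n \<Longrightarrow> 2 \<le> in_count ps i + sl ! i" "signed_euler_count ps (replicate n 0) \<noteq> 0"
    using cert unfolding AT_certificate_def by auto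
  then have P: "set ps \<subseteq> {..<n} \<times> {..<n}" by auto
  have orient: "is_orientation (\<phi> ` {..<n}) adj A"
    unfolding A_def using inj adj ps(2) by (rule is_orientation_map_prod)
  have "int (outdeg A (\<phi> i)) < f (\<phi> i)" if "i < n" for i
  proof -
    have "indeg A (\<phi> i) = in_count ps i"
      using indeg_map_prod[OF inj P] card_arcs_to_eq_in_count[OF ps(1)] that unfolding A_def by simp
    then show ?thesis
      using deg_in_eq_outdeg_plus_indeg[OF G orient, of "\<phi> i"] f[OF that] ps(3)[OF that] that
      by simp
  qed
  moreover have "card {B \<in> eulerian_subgraphs (\<phi> ` {..<n}) A. even (card B)} \<noteq>
                 card {B \<in> eulerian_subgraphs (\<phi> ` {..<n}) A. odd (card B)}"
  proof -
    have "signed_euler_count ps (replicate n 0) = signed_balanced_sum (set ps) (replicate n 0)"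
      using P by (intro signed_euler_count_eq_signed_balanced_sum[OF ps(1)]) (auto dest: ps(2))
    also have "\<dots> = int (card {B \<in> eulerian_subgraphs (\<phi> ` {..<n}) A. even (card B)}) -
                      int (card {B \<in> eulerian_subgraphs (\<phi> ` {..<n}) A. odd (card B)})"
      unfolding signed_balanced_sum_replicate_zero[OF finite_set] A_def
        card_eulerian_subgraphs_map_prod[OF inj P, of even]
        card_eulerian_subgraphs_map_prod[OF inj P, of odd] ..
    finally show ?thesis using ps(4) by linarith
  qed
  ultimately show ?thesis
    using orient unfolding f_AT_def AT_orientation_def by auto
qed

section \<open>Configurations in line graphs\<close>

(* The i-th edge of a configuration joins the vertices numbered fst (en ! i) and snd (en ! i) of
   the multigraph; the pattern requires the line graph of these edges to be the graph oriented
   by ps. *)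
definition shares_end :: "nat \<times> nat \<Rightarrow> nat \<times> nat \<Rightarrow> bool" where
  "shares_end e e' \<longleftrightarrow> fst e = fst e' \<or> fst e = snd e' \<or> snd e = fst e' \<or> snd e = snd e'"

definition line_graph_of_pattern :: "nat \<Rightarrow> (nat \<times> nat) list \<Rightarrow> (nat \<times> nat) list \<Rightarrow> bool" where
  "line_graph_of_pattern k en ps \<longleftrightarrow>
     (\<forall>(p, q)\<in>set en. p < k \<and> q < k) \<and>
     (\<forall>i<length en. \<forall>j<length en.
        i \<noteq> j \<and> shares_end (en ! i) (en ! j) \<longleftrightarrow> (i, j) \<in> set ps \<or> (j, i) \<in> set ps)"

lemma nth_doubletons_meet_iff:
  assumes "distinct hv" "fst e < length hv" "snd e < length hv"
    "fst e' < length hv" "snd e' < length hv"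
  shows "{hv ! fst e, hv ! snd e} \<inter> {hv ! fst e', hv ! snd e'} \<noteq> {} \<longleftrightarrow> shares_end e e'"
  using assms nth_eq_iff_index_eq[OF assms(1)] unfolding shares_end_def by auto

(* In each join of K_r with F, the vertices 0, ..., r - 1 form the clique K_r.  The
   orientations were found by computer search. *)

lemma AT_certificate_K1: "AT_certificate 1 [2] []"
  unfolding AT_certificate_def by code_simp

definition K4_join_2K1_orientation :: "(nat \<times> nat) list" where
  "K4_join_2K1_orientation =
    [(2, 4), (4, 0), (2, 0), (3, 4), (2, 3), (3, 0), (4, 1), (1, 2), (1, 0), (3, 1), (2, 5),
     (0, 5), (5, 3), (5, 1)]"

lemma AT_certificate_K4_join_2K1:
  "AT_certificate 6 (replicate 4 1 @ replicate 2 0) K4_join_2K1_orientation"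
  unfolding AT_certificate_def K4_join_2K1_orientation_def by code_simp

definition K4_join_2K2_orientation :: "(nat \<times> nat) list" where
  "K4_join_2K2_orientation =
    [(5, 4), (1, 4), (1, 5), (4, 0), (5, 0), (0, 1), (4, 2), (2, 5), (1, 2), (0, 2), (4, 3),
     (3, 5), (1, 3), (3, 0), (2, 3), (1, 7), (7, 0), (7, 2), (3, 7), (6, 1), (6, 0), (2, 6),
     (3, 6), (6, 7)]"

lemma AT_certificate_K4_join_2K2: "AT_certificate 8 (replicate 8 0) K4_join_2K2_orientation"
  unfolding AT_certificate_def K4_join_2K2_orientation_def by code_simp

definition K4_join_P4_orientation :: "(nat \<times> nat) list" where
  "K4_join_P4_orientation =
    [(5, 2), (5, 4), (4, 2), (0, 5), (0, 2), (0, 4), (1, 5), (1, 2), (4, 1), (0, 1), (3, 5),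
     (3, 2), (4, 3), (0, 3), (3, 1), (6, 2), (4, 6), (6, 0), (6, 1), (6, 3), (7, 2), (7, 0),
     (1, 7), (3, 7), (7, 6)]"

lemma AT_certificate_K4_join_P4: "AT_certificate 8 (replicate 8 0) K4_join_P4_orientation"
  unfolding AT_certificate_def K4_join_P4_orientation_def by code_simp

definition K4_join_C4_orientation :: "(nat \<times> nat) list" where
  "K4_join_C4_orientation =
    [(0, 2), (5, 2), (5, 0), (3, 2), (3, 0), (3, 5), (4, 2), (4, 0), (4, 5), (3, 4), (7, 2),
     (7, 0), (5, 7), (7, 3), (1, 2), (1, 0), (5, 1), (3, 1), (1, 4), (7, 1), (6, 2), (6, 0),
     (6, 3), (4, 6), (6, 7), (1, 6)]"

lemma AT_certificate_K4_join_C4: "AT_certificate 8 (replicate 8 0) K4_join_C4_orientation"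
  unfolding AT_certificate_def K4_join_C4_orientation_def by code_simp

definition K3_join_P3_orientation :: "(nat \<times> nat) list" where
  "K3_join_P3_orientation =
    [(1, 5), (5, 3), (1, 3), (5, 0), (0, 1), (0, 3), (2, 5), (1, 2), (2, 3), (0, 2), (1, 4),
     (3, 4), (4, 0), (4, 2)]"

lemma AT_certificate_K3_join_P3:
  "AT_certificate 6 (replicate 3 1 @ replicate 3 0) K3_join_P3_orientation"
  unfolding AT_certificate_def K3_join_P3_orientation_def by code_simp

definition K3_join_P4_orientation :: "(nat \<times> nat) list" where
  "K3_join_P4_orientation =
    [(4, 6), (6, 2), (4, 2), (1, 6), (1, 4), (1, 2), (0, 6), (4, 0), (0, 2), (0, 1), (3, 4),
     (2, 3), (1, 3), (3, 0), (2, 5), (5, 1), (5, 0), (3, 5)]"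

lemma AT_certificate_K3_join_P4: "AT_certificate 7 (replicate 7 0) K3_join_P4_orientation"
  unfolding AT_certificate_def K3_join_P4_orientation_def by code_simp

definition K3_join_C4_orientation :: "(nat \<times> nat) list" where
  "K3_join_C4_orientation =
    [(3, 1), (5, 1), (3, 5), (4, 1), (4, 3), (2, 1), (2, 3), (2, 5), (2, 4), (0, 1), (3, 0),
     (5, 0), (4, 0), (0, 2), (6, 1), (5, 6), (6, 4), (6, 2), (0, 6)]"

lemma AT_certificate_K3_join_C4: "AT_certificate 7 (replicate 7 0) K3_join_C4_orientation"
  unfolding AT_certificate_def K3_join_C4_orientation_def by code_simp

lemma obtain_two_elements:
  assumes "finite A" "2 \<le> card A"
  obtains a b where "a \<in> A" "b \<in> A" "a \<noteq> b"
  using assms card_le_Suc0_iff_eq[OF assms(1)] by fastforce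

lemma obtain_distinct_list:
  assumes "finite A" "n \<le> card A"
  obtains xs where "distinct xs" "length xs = n" "set xs \<subseteq> A"
proof -
  obtain B where "B \<subseteq> A" "card B = n" "finite B"
    using obtain_subset_with_card_n[OF assms(2)] by blast
  then show ?thesis
    using that finite_distinct_list[of B] distinct_card by metis
qed

section \<open>Multigraphs with a BK-free line graph\<close>

locale bk_free_line_graph =
  fixes V :: "'v set" and adj :: "'v \<Rightarrow> 'v \<Rightarrow> bool" and ends :: "'v \<Rightarrow> 'x set"
  assumes simple: "simple_graph V adj"
    and bk_free: "BK_free V adj"
    and clique_less: "clique_number V adj < max_degree V adj"
    and line_graph: "line_graph_of V adj ends"
begin

abbreviation \<Delta> where "\<Delta> \<equiv> max_degree V adj"

definition edges_at :: "'x \<Rightarrow> 'v set" where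
  "edges_at u = {e \<in> V. u \<in> ends e}"

definition parallel_edges :: "'x \<Rightarrow> 'x \<Rightarrow> 'v set" where
  "parallel_edges x y = {e \<in> V. ends e = {x, y}}"

definition other_end :: "'x \<Rightarrow> 'v \<Rightarrow> 'x" where
  "other_end x e = the_elem (ends e - {x})"

definition triangle_edges :: "'x \<Rightarrow> 'x \<Rightarrow> 'x \<Rightarrow> 'v set" where
  "triangle_edges x y z = {e \<in> V. ends e \<subseteq> {x, y, z}}"

lemma finite_V: "finite V"
  using simple unfolding simple_graph_def by simp

lemma finite_edges_at: "finite (edges_at u)"
  unfolding edges_at_def using finite_V by simp

lemma adj_iff: "adj e e' \<longleftrightarrow> e \<in> V \<and> e' \<in> V \<and> e \<noteq> e' \<and> ends e \<inter> ends e' \<noteq> {}"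
  using simple line_graph unfolding simple_graph_def line_graph_of_def by blast

lemma card_ends: "e \<in> V \<Longrightarrow> card (ends e) = 2"
  using line_graph unfolding line_graph_of_def by simp

lemma ends_eq_other_end:
  assumes "e \<in> V" "x \<in> ends e"
  shows "ends e = {x, other_end x e}" "other_end x e \<noteq> x"
proof -
  obtain u v where "u \<noteq> v" "ends e = {u, v}"
    using card_ends[OF assms(1)] by (auto simp: card_2_iff)
  then obtain z where z: "z \<noteq> x" "ends e = {x, z}"
    using assms(2) by (metis insert_commute insertE singletonD)
  then have "ends e - {x} = {z}" by auto
  with z show "ends e = {x, other_end x e}" "other_end x e \<noteq> x"
    unfolding other_end_def by auto
qed

lemma other_end_facts:
  assumes "e \<in> edges_at x - edges_at y"
  shows "e \<in> V - parallel_edges x y" "ends e = {x, other_end x e}" "other_end x e \<noteq> x"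
    "other_end x e \<noteq> y"
  using assms ends_eq_other_end[of e x] unfolding edges_at_def parallel_edges_def by auto

lemma parallel_edges_commute: "parallel_edges x y = parallel_edges y x"
  unfolding parallel_edges_def by (simp add: insert_commute)

lemma parallel_edges_distinct_ends: "e \<in> parallel_edges x y \<Longrightarrow> x \<noteq> y"
  using card_ends unfolding parallel_edges_def by fastforce

lemma parallel_list_distinct_ends:
  assumes "set as \<subseteq> parallel_edges x y" "0 < length as"
  shows "x \<noteq> y"
proof -
  have "as ! 0 \<in> parallel_edges x y"
    using assms nth_mem[of 0 as] by auto
  then show ?thesis by (rule parallel_edges_distinct_ends)
qed

lemma deg_le_max_degree: "e \<in> V \<Longrightarrow> deg_in V adj e \<le> \<Delta>"
  unfolding max_degree_def using finite_V by (intro Max_ge) auto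

lemma deg_in_parallel_edge:
  assumes "e \<in> parallel_edges x y"
  shows "deg_in V adj e + 1 = card (edges_at x \<union> edges_at y)"
proof -
  have "{w \<in> V. adj e w} = (edges_at x \<union> edges_at y) - {e}"
    using assms unfolding edges_at_def parallel_edges_def by (auto simp: adj_iff)
  moreover have "e \<in> edges_at x \<union> edges_at y"
    using assms unfolding edges_at_def parallel_edges_def by auto
  ultimately show ?thesis
    unfolding deg_in_def using finite_edges_at card_Suc_Diff1[of "edges_at x \<union> edges_at y" e]
    by simp
qed

lemma card_less_max_degree_if_pairwise_meet:
  assumes "K \<subseteq> V" "\<And>e e'. e \<in> K \<Longrightarrow> e' \<in> K \<Longrightarrow> e \<noteq> e' \<Longrightarrow> ends e \<inter> ends e' \<noteq> {}"
  shows "card K < \<Delta>"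
proof -
  have "is_clique V adj K"
    unfolding is_clique_def using assms by (auto simp: adj_iff)
  moreover have "finite {card K | K. is_clique V adj K}"
    using finite_V by (rule finite_surj[OF finite_Pow_iff[THEN iffD2]]) (auto simp: is_clique_def)
  ultimately have "card K \<le> clique_number V adj"
    unfolding clique_number_def by (auto intro: Max_ge)
  then show ?thesis using clique_less by simp
qed

lemma card_edges_at_less: "card (edges_at u) < \<Delta>"
  by (rule card_less_max_degree_if_pairwise_meet) (auto simp: edges_at_def)

lemma configuration_False:
  assumes l: "distinct l" "set l \<subseteq> V" "l \<noteq> []" and hv: "distinct hv"
    and ends: "list_all2 (\<lambda>e (p, q). ends e = {hv ! p, hv ! q}) l en"
    and pattern: "line_graph_of_pattern (length hv) en ps"
    and cert: "AT_certificate (length l) sl ps"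
    and slack: "list_all2 (\<lambda>e s. int s + int (deg_in V adj e) \<le> int \<Delta>) l sl"
  shows False
proof -
  let ?n = "length l"
  have S: "(!) l ` {..<?n} = set l"
    by (auto simp: in_set_conv_nth)
  have en: "length en = ?n" "\<And>i. i < ?n \<Longrightarrow> ends (l ! i) = {hv ! fst (en ! i), hv ! snd (en ! i)}"
    using ends by (auto simp: list_all2_conv_all_nth split: prod.splits)
  have range: "fst (en ! i) < length hv" "snd (en ! i) < length hv" if "i < ?n" for i
    using pattern nth_mem[of i en] that en(1) unfolding line_graph_of_pattern_def by fastforce+
  have "f_AT ((!) l ` {..<?n}) adj (f_BK V adj (set l))"
  proof (rule f_AT_of_AT_certificate[OF simple _ _ cert])
    show "(!) l ` {..<?n} \<subseteq> V" "inj_on ((!) l) {..<?n}"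
      using l by (auto simp: S inj_on_def nth_eq_iff_index_eq)
  next
    fix i j assume ij: "i < ?n" "j < ?n"
    have "adj (l ! i) (l ! j) \<longleftrightarrow> i \<noteq> j \<and> shares_end (en ! i) (en ! j)"
      using ij l en(2)[OF ij(1)] en(2)[OF ij(2)] range[OF ij(1)] range[OF ij(2)]
        nth_doubletons_meet_iff[OF hv] nth_eq_iff_index_eq[OF l(1)]
      by (auto simp: adj_iff)
    then show "adj (l ! i) (l ! j) \<longleftrightarrow> (i, j) \<in> set ps \<or> (j, i) \<in> set ps"
      using pattern ij en(1) unfolding line_graph_of_pattern_def by auto
  next
    fix i assume "i < ?n"
    then show "int (deg_in ((!) l ` {..<?n}) adj (l ! i)) + int (sl ! i)
        \<le> f_BK V adj (set l) (l ! i) + 1"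
      using slack unfolding f_BK_def S by (auto simp: list_all2_conv_all_nth)
  qed
  then show False
    using bk_free l unfolding BK_free_def S by auto
qed

(* The parallel edges have degree |E(x) \<union> E(y)| - 1, so s is admissible slack for them. *)
lemma parallel_configuration_False:
  assumes pattern: "line_graph_of_pattern k (replicate m (0, 1) @ en) ps"
    and cert: "AT_certificate n sl ps" "n = m + length rest"
      "sl = replicate m s @ replicate (n - m) 0"
    and as: "distinct as" "set as \<subseteq> parallel_edges x y" "length as = m" "0 < m"
    and rest: "distinct rest" "set rest \<subseteq> V - parallel_edges x y"
    and hv: "distinct (x # y # ws)" "length ws + 2 = k"
    and ends: "list_all2 (\<lambda>e (p, q). ends e = {(x # y # ws) ! p, (x # y # ws) ! q}) rest en"
    and slack: "s = 0 \<or> card (edges_at x \<union> edges_at y) + s \<le> \<Delta> + 1"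
  shows False
proof (rule configuration_False[OF _ _ _ hv(1)])
  show "distinct (as @ rest)" "set (as @ rest) \<subseteq> V" "as @ rest \<noteq> []"
    using as rest unfolding parallel_edges_def by auto
  show "list_all2 (\<lambda>e (p, q). ends e = {(x # y # ws) ! p, (x # y # ws) ! q}) (as @ rest)
          (replicate m (0, 1) @ en)"
    using as(2,3) ends unfolding parallel_edges_def
    by (intro list_all2_appendI) (auto simp: list_all2_conv_all_nth dest!: nth_mem)
  show "line_graph_of_pattern (length (x # y # ws)) (replicate m (0, 1) @ en) ps"
    using pattern hv(2) by simp
  show "AT_certificate (length (as @ rest)) sl ps"
    using cert as(3) by simp
  have "int s + int (deg_in V adj a) \<le> int \<Delta>" if "a \<in> set as" for a
    using slack deg_in_parallel_edge[of a x y] deg_le_max_degree[of a] as(2) that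
    unfolding parallel_edges_def by auto
  then have "list_all2 (\<lambda>e s. int s + int (deg_in V adj e) \<le> int \<Delta>) as (replicate m s)"
    using as(3) by (auto simp: list_all2_conv_all_nth)
  moreover have "list_all2 (\<lambda>e s. int s + int (deg_in V adj e) \<le> int \<Delta>) rest (replicate (n - m) 0)"
    using cert(2) rest(2) deg_le_max_degree by (auto simp: list_all2_conv_all_nth dest!: nth_mem)
  ultimately show "list_all2 (\<lambda>e s. int s + int (deg_in V adj e) \<le> int \<Delta>) (as @ rest) sl"
    unfolding cert(3) by (rule list_all2_appendI)
qed

lemma max_degree_le_Suc_deg:
  assumes "e \<in> V"
  shows "\<Delta> \<le> deg_in V adj e + 1"
proof (rule ccontr)
  assume low: "\<not> ?thesis"
  obtain x y where "ends e = {x, y}"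
    using card_ends[OF assms] by (auto simp: card_2_iff)
  then have e: "e \<in> parallel_edges x y"
    using assms unfolding parallel_edges_def by simp
  have "line_graph_of_pattern 2 (replicate 1 (0, 1) @ []) []"
    unfolding line_graph_of_pattern_def by code_simp
  then show False
    by (rule parallel_configuration_False[OF _ AT_certificate_K1,
          where as = "[e]" and rest = "[]" and ws = "[]" and s = 2])
      (use e low deg_in_parallel_edge[OF e] parallel_edges_distinct_ends[OF e] in auto)
qed

lemma card_edges_at_pair_bounds:
  assumes "e \<in> parallel_edges x y"
  shows "\<Delta> \<le> card (edges_at x \<union> edges_at y)" "card (edges_at x \<union> edges_at y) \<le> \<Delta> + 1"
  using deg_in_parallel_edge[OF assms] max_degree_le_Suc_deg deg_le_max_degree assms
  unfolding parallel_edges_def by force+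

lemma two_le_card_private_edges:
  assumes "card (edges_at x \<union> edges_at y) = \<Delta> + 1"
  shows "2 \<le> card (edges_at y - edges_at x)"
proof -
  have "card (edges_at x \<union> edges_at y) = card (edges_at x) + card (edges_at y - edges_at x)"
    using finite_edges_at
    by (subst card_Un_disjoint[symmetric]) (auto intro: arg_cong[where f = card])
  then show ?thesis
    using assms card_edges_at_less[of x] by linarith
qed

subsection \<open>Edges of multiplicity four\<close>

lemma four_parallel_tight_False:
  assumes as: "distinct as" "set as \<subseteq> parallel_edges x y" "length as = 4"
    and tight: "card (edges_at x \<union> edges_at y) = \<Delta>"
  shows False
proof -
  obtain g h where g: "g \<in> edges_at x - edges_at y" and h: "h \<in> edges_at y - edges_at x"
    and disjoint: "ends g \<inter> ends h = {}"
  proof -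
    have "\<not> card (edges_at x \<union> edges_at y) < \<Delta>" using tight by simp
    then obtain e e' where "e \<in> edges_at x \<union> edges_at y" "e' \<in> edges_at x \<union> edges_at y"
        "ends e \<inter> ends e' = {}"
      using card_less_max_degree_if_pairwise_meet[of "edges_at x \<union> edges_at y"]
      unfolding edges_at_def by blast
    then show ?thesis using that unfolding edges_at_def by (auto simp: inf_commute)
  qed
  note G = other_end_facts[OF g] and H = other_end_facts[OF h, folded parallel_edges_commute]
  have "line_graph_of_pattern 4 (replicate 4 (0, 1) @ [(0, 2), (1, 3)]) K4_join_2K1_orientation"
    unfolding line_graph_of_pattern_def K4_join_2K1_orientation_def by code_simp
  then show False
    by (rule parallel_configuration_False[OF _ AT_certificate_K4_join_2K1,
          where as = as and x = x and y = y and rest = "[g, h]"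
          and ws = "[other_end x g, other_end y h]" and s = 1])
      (use as tight G H disjoint in \<open>auto simp: replicate_add[symmetric]\<close>)
qed

lemma four_parallel_separated_pendants_False:
  assumes as: "distinct as" "set as \<subseteq> parallel_edges x y" "length as = 4"
    and g: "g1 \<in> edges_at x - edges_at y" "g2 \<in> edges_at x - edges_at y" "g1 \<noteq> g2"
    and h: "h1 \<in> edges_at y - edges_at x" "h2 \<in> edges_at y - edges_at x" "h1 \<noteq> h2"
    and separated: "{other_end x g1, other_end x g2} \<inter> {other_end y h1, other_end y h2} = {}"
  shows False
proof -
  define a1 a2 b1 b2 where "a1 = other_end x g1" "a2 = other_end x g2"
    "b1 = other_end y h1" "b2 = other_end y h2"
  have "x \<noteq> y" "distinct [g1, g2, h1, h2]"
    using g h unfolding edges_at_def by auto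
  note facts = as this separated[folded a1_a2_b1_b2_def]
    other_end_facts[OF g(1), folded a1_a2_b1_b2_def(1)]
    other_end_facts[OF g(2), folded a1_a2_b1_b2_def(2)]
    other_end_facts[OF h(1), folded a1_a2_b1_b2_def(3) parallel_edges_commute]
    other_end_facts[OF h(2), folded a1_a2_b1_b2_def(4) parallel_edges_commute]
  have patterns:
    "line_graph_of_pattern 4 (replicate 4 (0, 1) @ [(0, 2), (0, 2), (1, 3), (1, 3)])
       K4_join_2K2_orientation"
    "line_graph_of_pattern 5 (replicate 4 (0, 1) @ [(0, 2), (0, 2), (1, 3), (1, 4)])
       K4_join_2K2_orientation"
    "line_graph_of_pattern 5 (replicate 4 (0, 1) @ [(0, 2), (0, 3), (1, 4), (1, 4)])
       K4_join_2K2_orientation"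
    "line_graph_of_pattern 6 (replicate 4 (0, 1) @ [(0, 2), (0, 3), (1, 4), (1, 5)])
       K4_join_2K2_orientation"
    unfolding line_graph_of_pattern_def K4_join_2K2_orientation_def by code_simp+
  consider "a1 = a2" "b1 = b2" | "a1 = a2" "b1 \<noteq> b2" | "a1 \<noteq> a2" "b1 = b2" | "a1 \<noteq> a2" "b1 \<noteq> b2"
    by blast
  then show False
  proof cases
    case 1
    show False
      by (rule parallel_configuration_False[OF patterns(1) AT_certificate_K4_join_2K2,
            where as = as and x = x and y = y and rest = "[g1, g2, h1, h2]" and ws = "[a1, b1]"
            and s = 0])
        (use 1 facts in \<open>auto simp: replicate_add[symmetric]\<close>)
  next
    case 2
    show False
      by (rule parallel_configuration_False[OF patterns(2) AT_certificate_K4_join_2K2,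
            where as = as and x = x and y = y and rest = "[g1, g2, h1, h2]" and ws = "[a1, b1, b2]"
            and s = 0])
        (use 2 facts in \<open>auto simp: replicate_add[symmetric]\<close>)
  next
    case 3
    show False
      by (rule parallel_configuration_False[OF patterns(3) AT_certificate_K4_join_2K2,
            where as = as and x = x and y = y and rest = "[g1, g2, h1, h2]" and ws = "[a1, a2, b1]"
            and s = 0])
        (use 3 facts in \<open>auto simp: replicate_add[symmetric]\<close>)
  next
    case 4
    show False
      by (rule parallel_configuration_False[OF patterns(4) AT_certificate_K4_join_2K2,
            where as = as and x = x and y = y and rest = "[g1, g2, h1, h2]"
            and ws = "[a1, a2, b1, b2]" and s = 0])
        (use 4 facts in \<open>auto simp: replicate_add[symmetric]\<close>)
  qed
qed

lemma four_parallel_matched_pendants_False: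
  assumes as: "distinct as" "set as \<subseteq> parallel_edges x y" "length as = 4"
    and g: "g1 \<in> edges_at x - edges_at y" "g2 \<in> edges_at x - edges_at y"
    and h: "h1 \<in> edges_at y - edges_at x" "h2 \<in> edges_at y - edges_at x"
    and matched: "other_end x g1 = other_end y h1"
    and spread: "other_end x g1 \<noteq> other_end x g2" "other_end y h1 \<noteq> other_end y h2"
  shows False
proof -
  define a1 a2 b1 b2 where "a1 = other_end x g1" "a2 = other_end x g2"
    "b1 = other_end y h1" "b2 = other_end y h2"
  have "x \<noteq> y" "distinct [g1, g2, h1, h2]"
    using g h spread unfolding edges_at_def by auto
  note facts = as this matched[folded a1_a2_b1_b2_def] spread[folded a1_a2_b1_b2_def]
    other_end_facts[OF g(1), folded a1_a2_b1_b2_def(1)]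
    other_end_facts[OF g(2), folded a1_a2_b1_b2_def(2)]
    other_end_facts[OF h(1), folded a1_a2_b1_b2_def(3) parallel_edges_commute]
    other_end_facts[OF h(2), folded a1_a2_b1_b2_def(4) parallel_edges_commute]
  show False
  proof (cases "a2 = b2")
    case True
    have "line_graph_of_pattern 4 (replicate 4 (0, 1) @ [(0, 2), (0, 3), (1, 2), (1, 3)])
        K4_join_C4_orientation"
      unfolding line_graph_of_pattern_def K4_join_C4_orientation_def by code_simp
    then show False
      by (rule parallel_configuration_False[OF _ AT_certificate_K4_join_C4,
            where as = as and x = x and y = y and rest = "[g1, g2, h1, h2]" and ws = "[a1, a2]"
            and s = 0])
        (use True facts in \<open>auto simp: replicate_add[symmetric]\<close>)
  next
    case False
    have "line_graph_of_pattern 5 (replicate 4 (0, 1) @ [(0, 2), (0, 3), (1, 2), (1, 4)])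
        K4_join_P4_orientation"
      unfolding line_graph_of_pattern_def K4_join_P4_orientation_def by code_simp
    then show False
      by (rule parallel_configuration_False[OF _ AT_certificate_K4_join_P4,
            where as = as and x = x and y = y and rest = "[g1, g2, h1, h2]" and ws = "[a1, a2, b2]"
            and s = 0])
        (use False facts in \<open>auto simp: replicate_add[symmetric]\<close>)
  qed
qed

lemma four_parallel_pendants_False:
  assumes as: "distinct as" "set as \<subseteq> parallel_edges x y" "length as = 4"
    and g: "g1 \<in> edges_at x - edges_at y" "g2 \<in> edges_at x - edges_at y" "g1 \<noteq> g2"
    and h: "h1 \<in> edges_at y - edges_at x" "h2 \<in> edges_at y - edges_at x" "h1 \<noteq> h2"
    and no_triple_x:
      "other_end x g1 = other_end x g2 \<Longrightarrow> other_end x g1 \<notin> {other_end y h1, other_end y h2}"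
    and no_triple_y:
      "other_end y h1 = other_end y h2 \<Longrightarrow> other_end y h1 \<notin> {other_end x g1, other_end x g2}"
  shows False
proof (cases "{other_end x g1, other_end x g2} \<inter> {other_end y h1, other_end y h2} = {}")
  case True
  then show False using four_parallel_separated_pendants_False[OF as g h] by blast
next
  case False
  then have spread: "other_end x g1 \<noteq> other_end x g2" "other_end y h1 \<noteq> other_end y h2"
    using no_triple_x no_triple_y by auto
  note matched = four_parallel_matched_pendants_False[OF as]
  from False consider "other_end x g1 = other_end y h1" | "other_end x g1 = other_end y h2"
    | "other_end x g2 = other_end y h1" | "other_end x g2 = other_end y h2"
    by blast
  then show False
    by cases (use matched[OF g(1,2) h(1,2)] matched[OF g(1,2) h(2,1)] matched[OF g(2,1) h(1,2)]
        matched[OF g(2,1) h(2,1)] spread in auto)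
qed

lemma four_parallel_constant_far_False:
  assumes as: "distinct as" "set as \<subseteq> parallel_edges x y" "length as = 4"
    and loose: "card (edges_at x \<union> edges_at y) = \<Delta> + 1"
    and constant_far: "\<forall>h\<in>edges_at y - edges_at x. other_end y h = w"
  shows False
proof -
  define P where "P = {g \<in> edges_at x - edges_at y. other_end x g \<noteq> w}"
  have PU: "P \<subseteq> edges_at x \<union> edges_at y" and finite_P: "finite P"
    unfolding P_def using finite_edges_at by auto
  txt \<open>Outside the parallel class, every edge at x or y not in P ends in w.\<close>
  have "card ((edges_at x \<union> edges_at y) - P) < \<Delta>"
  proof (rule card_less_max_degree_if_pairwise_meet)
    fix e e'
    assume e: "e \<in> (edges_at x \<union> edges_at y) - P" and e': "e' \<in> (edges_at x \<union> edges_at y) - P"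
    have "w \<in> ends d" if "d \<in> (edges_at x \<union> edges_at y) - P" "d \<notin> edges_at x \<or> d \<notin> edges_at y" for d
      using that constant_far other_end_facts(2)[of d x y] other_end_facts(2)[of d y x]
      unfolding P_def by auto
    then show "ends e \<inter> ends e' \<noteq> {}"
      using e e' unfolding edges_at_def by blast
  qed (auto simp: edges_at_def)
  then have "2 \<le> card P"
    using loose card_Diff_subset[OF finite_P PU] card_mono[OF _ PU] finite_edges_at by fastforce
  then obtain g1 g2 where g: "g1 \<in> P" "g2 \<in> P" "g1 \<noteq> g2"
    using obtain_two_elements[OF finite_P] by blast
  obtain h1 h2 where h: "h1 \<in> edges_at y - edges_at x" "h2 \<in> edges_at y - edges_at x" "h1 \<noteq> h2"
    using obtain_two_elements[OF _ two_le_card_private_edges[OF loose]] finite_edges_at by blast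
  show False
    by (rule four_parallel_pendants_False[OF as, of g1 g2 h1 h2])
      (use g h constant_far in \<open>auto simp: P_def\<close>)
qed

lemma four_parallel_loose_False:
  assumes as: "distinct as" "set as \<subseteq> parallel_edges x y" "length as = 4"
    and loose: "card (edges_at x \<union> edges_at y) = \<Delta> + 1"
  shows False
proof (cases "\<exists>w. \<forall>h\<in>edges_at y - edges_at x. other_end y h = w")
  case True
  then show False using four_parallel_constant_far_False[OF as loose] by blast
next
  case spread_y: False
  show False
  proof (cases "\<exists>w. \<forall>g\<in>edges_at x - edges_at y. other_end x g = w")
    case True
    have "card (edges_at y \<union> edges_at x) = \<Delta> + 1" "set as \<subseteq> parallel_edges y x"
      using loose as(2) by (simp_all add: Un_commute parallel_edges_commute)
    then show False
      using True four_parallel_constant_far_False[OF as(1) _ as(3)] by blast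
  next
    case False
    then obtain g1 g2 where "g1 \<in> edges_at x - edges_at y" "g2 \<in> edges_at x - edges_at y"
        "other_end x g1 \<noteq> other_end x g2"
      by blast
    moreover obtain h1 h2 where "h1 \<in> edges_at y - edges_at x" "h2 \<in> edges_at y - edges_at x"
        "other_end y h1 \<noteq> other_end y h2"
      using spread_y by blast
    ultimately show False
      using four_parallel_pendants_False[OF as] by blast
  qed
qed

lemma multiplicity_le_three: "multiplicity V ends x y \<le> 3"
proof (rule ccontr)
  assume "\<not> ?thesis"
  then obtain as where as: "distinct as" "set as \<subseteq> parallel_edges x y" "length as = 4"
    using obtain_distinct_list[of "parallel_edges x y" 4] finite_V
    unfolding multiplicity_def parallel_edges_def by force
  then have "as ! 0 \<in> parallel_edges x y"
    using nth_mem[of 0 as] by auto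
  then consider "card (edges_at x \<union> edges_at y) = \<Delta>" | "card (edges_at x \<union> edges_at y) = \<Delta> + 1"
    using card_edges_at_pair_bounds by force
  then show False
    by cases (use four_parallel_tight_False[OF as] four_parallel_loose_False[OF as] in blast)+
qed

subsection \<open>Triple edges on triangles\<close>

lemma triangle_edges_commute: "triangle_edges y x z = triangle_edges x y z"
  unfolding triangle_edges_def by (simp add: insert_commute)

lemma triangle_edges_subset: "triangle_edges x y z \<subseteq> edges_at x \<union> edges_at y"
proof
  fix e assume e: "e \<in> triangle_edges x y z"
  then have "card (ends e) = 2" "ends e \<subseteq> {x, y, z}"
    unfolding triangle_edges_def by (auto intro: card_ends)
  then have "ends e \<noteq> {z}" "ends e \<noteq> {}" by auto
  with \<open>ends e \<subseteq> {x, y, z}\<close> have "x \<in> ends e \<or> y \<in> ends e" by blast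
  with e show "e \<in> edges_at x \<union> edges_at y"
    unfolding triangle_edges_def edges_at_def by auto
qed

lemma card_triangle_edges_less: "card (triangle_edges x y z) < \<Delta>"
proof (rule card_less_max_degree_if_pairwise_meet)
  fix e e' assume "e \<in> triangle_edges x y z" "e' \<in> triangle_edges x y z"
  then have sub: "ends e \<union> ends e' \<subseteq> set [x, y, z]"
    and card: "card (ends e) = 2" "card (ends e') = 2"
    unfolding triangle_edges_def by (auto intro: card_ends)
  have "card (ends e \<union> ends e') \<le> 3"
    using card_mono[OF _ sub] card_length[of "[x, y, z]"] by simp
  then show "ends e \<inter> ends e' \<noteq> {}"
    using card card_Un_disjoint[of "ends e" "ends e'"] card_ge_0_finite[of "ends e"]
      card_ge_0_finite[of "ends e'"] by auto
qed (auto simp: triangle_edges_def)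

lemma edge_outside_triangle_facts:
  assumes "e \<in> edges_at x - triangle_edges x y z" "x \<noteq> y"
  shows "e \<in> V - parallel_edges x y" "e \<notin> edges_at y" "ends e = {x, other_end x e}"
    "other_end x e \<noteq> x" "other_end x e \<noteq> y" "other_end x e \<noteq> z"
  using assms ends_eq_other_end[of e x]
  unfolding edges_at_def triangle_edges_def parallel_edges_def by auto

lemma triangle_side_facts:
  assumes "gz \<in> parallel_edges x z" "hz \<in> parallel_edges y z" "x \<noteq> y"
  shows "ends gz = {x, z}" "ends hz = {y, z}" "x \<noteq> z" "y \<noteq> z"
    "gz \<in> V - parallel_edges x y" "hz \<in> V - parallel_edges x y" "gz \<noteq> hz"
    "gz \<in> triangle_edges x y z" "hz \<in> triangle_edges x y z"
  using assms parallel_edges_distinct_ends[OF assms(1)] parallel_edges_distinct_ends[OF assms(2)]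
  unfolding parallel_edges_def triangle_edges_def by (auto simp: doubleton_eq_iff)

lemma three_parallel_tight_triangle_False:
  assumes as: "distinct as" "set as \<subseteq> parallel_edges x y" "length as = 3"
    and z: "gz \<in> parallel_edges x z" "hz \<in> parallel_edges y z"
    and tight: "card (edges_at x \<union> edges_at y) = \<Delta>"
    and e: "e \<in> edges_at x - triangle_edges x y z"
  shows False
proof -
  have "x \<noteq> y"
    using parallel_list_distinct_ends[OF as(2)] as(3) by simp
  have "line_graph_of_pattern 4 (replicate 3 (0, 1) @ [(0, 2), (1, 2), (0, 3)])
      K3_join_P3_orientation"
    unfolding line_graph_of_pattern_def K3_join_P3_orientation_def by code_simp
  then show False
    by (rule parallel_configuration_False[OF _ AT_certificate_K3_join_P3,
          where as = as and x = x and y = y and rest = "[gz, hz, e]" and ws = "[z, other_end x e]"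
          and s = 1])
      (use as tight e z triangle_side_facts[OF z \<open>x \<noteq> y\<close>]
        edge_outside_triangle_facts[OF e \<open>x \<noteq> y\<close>]
        in \<open>auto simp: parallel_edges_def replicate_add[symmetric]\<close>)
qed

lemma three_parallel_two_sided_False:
  assumes as: "distinct as" "set as \<subseteq> parallel_edges x y" "length as = 3"
    and z: "gz \<in> parallel_edges x z" "hz \<in> parallel_edges y z"
    and g: "g \<in> edges_at x - triangle_edges x y z" and h: "h \<in> edges_at y - triangle_edges x y z"
  shows False
proof -
  have "x \<noteq> y"
    using parallel_list_distinct_ends[OF as(2)] as(3) by simp
  have "distinct [gz, hz, g, h]"
    using z g h triangle_side_facts[OF z \<open>x \<noteq> y\<close>]
      edge_outside_triangle_facts(2)[OF g \<open>x \<noteq> y\<close>]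
    by auto
  note facts = as z this \<open>x \<noteq> y\<close> triangle_side_facts[OF z \<open>x \<noteq> y\<close>]
    edge_outside_triangle_facts[OF g \<open>x \<noteq> y\<close>]
    edge_outside_triangle_facts[of h y x z, unfolded triangle_edges_commute[of y x z],
      OF h \<open>x \<noteq> y\<close>[symmetric], folded parallel_edges_commute[of x y]]
  show False
  proof (cases "other_end x g = other_end y h")
    case True
    have "line_graph_of_pattern 4 (replicate 3 (0, 1) @ [(0, 2), (1, 2), (0, 3), (1, 3)])
        K3_join_C4_orientation"
      unfolding line_graph_of_pattern_def K3_join_C4_orientation_def by code_simp
    then show False
      by (rule parallel_configuration_False[OF _ AT_certificate_K3_join_C4,
            where as = as and x = x and y = y and rest = "[gz, hz, g, h]"
            and ws = "[z, other_end x g]" and s = 0])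
        (use True facts in \<open>auto simp: replicate_add[symmetric]\<close>)
  next
    case False
    have "line_graph_of_pattern 5 (replicate 3 (0, 1) @ [(0, 2), (1, 2), (0, 3), (1, 4)])
        K3_join_P4_orientation"
      unfolding line_graph_of_pattern_def K3_join_P4_orientation_def by code_simp
    then show False
      by (rule parallel_configuration_False[OF _ AT_certificate_K3_join_P4,
            where as = as and x = x and y = y and rest = "[gz, hz, g, h]"
            and ws = "[z, other_end x g, other_end y h]" and s = 0])
        (use False facts in \<open>auto simp: replicate_add[symmetric]\<close>)
  qed
qed

lemma private_edges_in_triangle:
  assumes "edges_at y \<subseteq> triangle_edges x y z"
  shows "edges_at y - edges_at x \<subseteq> parallel_edges y z"
proof
  fix h assume "h \<in> edges_at y - edges_at x"
  then have h: "h \<in> V" "y \<in> ends h" "x \<notin> ends h" "ends h \<subseteq> {x, y, z}"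
    using assms unfolding edges_at_def triangle_edges_def by auto
  then have "other_end y h = z"
    using ends_eq_other_end[OF h(1,2)] by blast
  then show "h \<in> parallel_edges y z"
    using ends_eq_other_end[OF h(1,2)] h(1) unfolding parallel_edges_def by simp
qed

lemma two_le_card_outside_triangle:
  assumes "card (edges_at x \<union> edges_at y) = \<Delta> + 1"
  shows "2 \<le> card ((edges_at x \<union> edges_at y) - triangle_edges x y z)"
proof -
  have "finite (edges_at x \<union> edges_at y)"
    using finite_edges_at by simp
  then have "card ((edges_at x \<union> edges_at y) - triangle_edges x y z) =
      card (edges_at x \<union> edges_at y) - card (triangle_edges x y z)"
    by (intro card_Diff_subset triangle_edges_subset)
      (auto intro: finite_subset[OF triangle_edges_subset])
  then show ?thesis
    using card_triangle_edges_less[of x y z] assms by linarith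
qed

lemma three_parallel_one_sided_False:
  assumes as: "distinct as" "set as \<subseteq> parallel_edges x y" "length as = 3"
    and gz: "gz \<in> parallel_edges x z"
    and loose: "card (edges_at x \<union> edges_at y) = \<Delta> + 1"
    and inside: "edges_at y \<subseteq> triangle_edges x y z"
  shows False
proof -
  have "x \<noteq> y"
    using parallel_list_distinct_ends[OF as(2)] as(3) by simp
  obtain h1 h2 where "h1 \<in> edges_at y - edges_at x" "h2 \<in> edges_at y - edges_at x" "h1 \<noteq> h2"
    by (rule obtain_two_elements[OF _ two_le_card_private_edges[OF loose]])
      (simp add: finite_edges_at)
  then have h: "h1 \<in> parallel_edges y z" "h2 \<in> parallel_edges y z" "h1 \<noteq> h2"
    using private_edges_in_triangle[OF inside] by auto
  have "(edges_at x \<union> edges_at y) - triangle_edges x y z = edges_at x - triangle_edges x y z"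
    using inside by blast
  then have "2 \<le> card (edges_at x - triangle_edges x y z)"
    using two_le_card_outside_triangle[OF loose, of z] by simp
  moreover have "finite (edges_at x - triangle_edges x y z)"
    using finite_edges_at by simp
  ultimately obtain g1 g2 where g: "g1 \<in> edges_at x - triangle_edges x y z"
      "g2 \<in> edges_at x - triangle_edges x y z" "g1 \<noteq> g2"
    using obtain_two_elements by blast
  note facts = as gz h g triangle_side_facts[OF gz h(1) \<open>x \<noteq> y\<close>]
    triangle_side_facts[OF gz h(2) \<open>x \<noteq> y\<close>]
    edge_outside_triangle_facts[OF g(1) \<open>x \<noteq> y\<close>] edge_outside_triangle_facts[OF g(2) \<open>x \<noteq> y\<close>]
  have patterns:
    "line_graph_of_pattern 4 (replicate 3 (0, 1) @ [(0, 2), (1, 2), (1, 2), (0, 3), (0, 3)])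
       K4_join_2K2_orientation"
    "line_graph_of_pattern 5 (replicate 3 (0, 1) @ [(0, 2), (1, 2), (1, 2), (0, 3), (0, 4)])
       K4_join_2K2_orientation"
    unfolding line_graph_of_pattern_def K4_join_2K2_orientation_def by code_simp+
  show False
  proof (cases "other_end x g1 = other_end x g2")
    case True
    show False
      by (rule parallel_configuration_False[OF patterns(1) AT_certificate_K4_join_2K2,
            where as = as and x = x and y = y and rest = "[gz, h1, h2, g1, g2]"
            and ws = "[z, other_end x g1]" and s = 0])
        (use True facts in \<open>auto simp: replicate_add[symmetric]\<close>)
  next
    case False
    show False
      by (rule parallel_configuration_False[OF patterns(2) AT_certificate_K4_join_2K2,
            where as = as and x = x and y = y and rest = "[gz, h1, h2, g1, g2]"
            and ws = "[z, other_end x g1, other_end x g2]" and s = 0])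
        (use False facts in \<open>auto simp: replicate_add[symmetric]\<close>)
  qed
qed

lemma three_parallel_tight_False:
  assumes as: "distinct as" "set as \<subseteq> parallel_edges x y" "length as = 3"
    and z: "gz \<in> parallel_edges x z" "hz \<in> parallel_edges y z"
    and tight: "card (edges_at x \<union> edges_at y) = \<Delta>"
  shows False
proof -
  have "triangle_edges x y z \<noteq> edges_at x \<union> edges_at y"
    using card_triangle_edges_less[of x y z] tight by auto
  then obtain e where "e \<in> (edges_at x \<union> edges_at y) - triangle_edges x y z"
    using triangle_edges_subset[of x y z] by blast
  then consider "e \<in> edges_at x - triangle_edges x y z" | "e \<in> edges_at y - triangle_edges y x z"
    unfolding triangle_edges_commute[of y x z] by blast
  then show False
  proof cases
    case 1
    then show False using three_parallel_tight_triangle_False[OF as z tight] by blast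
  next
    case 2
    have "set as \<subseteq> parallel_edges y x" "card (edges_at y \<union> edges_at x) = \<Delta>"
      using as(2) tight by (simp_all add: parallel_edges_commute Un_commute)
    with 2 show False using three_parallel_tight_triangle_False[OF as(1) _ as(3) z(2,1)] by blast
  qed
qed

lemma three_parallel_loose_False:
  assumes as: "distinct as" "set as \<subseteq> parallel_edges x y" "length as = 3"
    and z: "gz \<in> parallel_edges x z" "hz \<in> parallel_edges y z"
    and loose: "card (edges_at x \<union> edges_at y) = \<Delta> + 1"
  shows False
proof -
  consider "edges_at y \<subseteq> triangle_edges x y z" | "edges_at x \<subseteq> triangle_edges y x z"
    | "\<exists>g. g \<in> edges_at x - triangle_edges x y z" "\<exists>h. h \<in> edges_at y - triangle_edges x y z"
    unfolding triangle_edges_commute[of y x z] by blast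
  then show False
  proof cases
    case 1
    then show False using three_parallel_one_sided_False[OF as z(1) loose] by blast
  next
    case 2
    have "set as \<subseteq> parallel_edges y x" "card (edges_at y \<union> edges_at x) = \<Delta> + 1"
      using as(2) loose by (simp_all add: parallel_edges_commute Un_commute)
    with 2 show False using three_parallel_one_sided_False[OF as(1) _ as(3) z(2)] by blast
  next
    case 3
    then show False using three_parallel_two_sided_False[OF as z] by blast
  qed
qed

lemma no_triple_edge_on_triangle:
  assumes "multiplicity V ends x y = 3" "1 \<le> multiplicity V ends x z" "1 \<le> multiplicity V ends y z"
  shows False
proof -
  obtain as where as: "distinct as" "set as \<subseteq> parallel_edges x y" "length as = 3"
    using obtain_distinct_list[of "parallel_edges x y" 3] finite_V assms(1)
    unfolding multiplicity_def parallel_edges_def by force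
  have "parallel_edges x z \<noteq> {}" "parallel_edges y z \<noteq> {}"
    using assms(2,3) unfolding multiplicity_def parallel_edges_def
    by (metis card.empty not_one_le_zero)+
  then obtain gz hz where z: "gz \<in> parallel_edges x z" "hz \<in> parallel_edges y z"
    by blast
  have "as ! 0 \<in> parallel_edges x y"
    using as nth_mem[of 0 as] by auto
  then consider "card (edges_at x \<union> edges_at y) = \<Delta>" | "card (edges_at x \<union> edges_at y) = \<Delta> + 1"
    using card_edges_at_pair_bounds by force
  then show False
    by cases (use three_parallel_tight_False[OF as z] three_parallel_loose_False[OF as z] in blast)+
qed

end

theorem mainTheorem11:
  fixes V :: "'v set" and adj :: "'v \<Rightarrow> 'v \<Rightarrow> bool" and ends :: "'v \<Rightarrow> 'x set"
  assumes "simple_graph V adj"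
    and "BK_free V adj"
    and "clique_number V adj < max_degree V adj"
    and "line_graph_of V adj ends"
  shows "(\<forall>x y. multiplicity V ends x y \<le> 3) \<and>
         (\<forall>x1 x2. multiplicity V ends x1 x2 = 3 \<longrightarrow>
            \<not> (\<exists>x3. multiplicity V ends x1 x3 \<ge> 1 \<and> multiplicity V ends x2 x3 \<ge> 1))"
proof -
  interpret bk_free_line_graph V adj ends
    using assms by unfold_locales
  show ?thesis
    using multiplicity_le_three no_triple_edge_on_triangle by blast
qed

end
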